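(* For all $\theta,\theta'\in\Theta$ and $x\in\mathsf X$, $$\|P^\rho_\theta(x,\cdot)-P^\rho_{\theta'}(x,\cdot)\|_{TV}\le 4\sup_{i\in\{1,\dots,d\}}\Big|1-\frac{\rho(\theta'(i))}{\rho(\theta(i))}\Big|.$$
   Context: Let $\mathsf X\subset\mathbb R^D$ be measurable, $\lambda$ a nonnegative reference measure, $\pi$ a probability density on $\mathsf X$ w.r.t. $\lambda$. $\mathsf X=\bigcup_{i=1}^d\mathsf X_i$ is a partition into disjoint measurable strata, $\theta_\star(i)=\int_{\mathsf X_i}\pi\,d\lambda$, $\Theta=\{\theta\in(0,1)^d:\sum_i\theta(i)=1\}$. For a measurable $\rho:(0,1)\to(0,\infty)$ and $\theta\in\Theta$, $\pi^\rho_\theta(x)=(Z^\rho_\theta)^{-1}\sum_{i}\frac{\pi(x)}{\rho(\theta(i))}\mathbf 1_{\mathsf X_i}(x)$, $Z^\rho_\theta=\sum_i\frac{\theta_\star(i)}{\rho(\theta(i))}$. $P^\rho_\theta$ is the Metropolis–Hastings kernel with symmetric proposal density $q(x,y)$ w.r.t. $\lambda$ and target $\pi^\rho_\theta\,d\lambda$: $P^\rho_\theta f(x)=\int q(x,y)\alpha_\theta(x,y)f(y)\lambda(dy)+\big(1-\int q(x,y)\alpha_\theta(x,y)\lambda(dy)\big)f(x)$ with $\alpha_\theta(x,y)=1\wedge\frac{\pi^\rho_\theta(y)}{\pi^\rho_\theta(x)}$. For a signed measure $\nu$, $\|\nu\|_{TV}=\sup\{|\nu(f)|:\sup_{\mathsf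 X}|f|\le1\}$. *)

theory Defs
  imports "HOL-Analysis.Analysis"
begin

definition theta_star :: "(nat \<Rightarrow> 'a set) \<Rightarrow> 'a measure \<Rightarrow> ('a \<Rightarrow> real) \<Rightarrow> nat \<Rightarrow> real" where
  "theta_star S lam pd i = (LINT x:S i|lam. pd x)"

definition Theta :: "nat \<Rightarrow> (nat \<Rightarrow> real) set" where
  "Theta d = {\<theta>. (\<forall>i\<in>{1..d}. 0 < \<theta> i \<and> \<theta> i < 1) \<and> (\<Sum>i=1..d. \<theta> i) = 1}"

definition Zrho :: "nat \<Rightarrow> (nat \<Rightarrow> 'a set) \<Rightarrow> 'a measure \<Rightarrow> ('a \<Rightarrow> real) \<Rightarrow> (real \<Rightarrow> real)
    \<Rightarrow> (nat \<Rightarrow> real) \<Rightarrow> real" where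
  "Zrho d S lam pd \<rho> \<theta> = (\<Sum>i=1..d. theta_star S lam pd i / \<rho> (\<theta> i))"

definition pi_rho :: "nat \<Rightarrow> (nat \<Rightarrow> 'a set) \<Rightarrow> 'a measure \<Rightarrow> ('a \<Rightarrow> real) \<Rightarrow> (real \<Rightarrow> real)
    \<Rightarrow> (nat \<Rightarrow> real) \<Rightarrow> 'a \<Rightarrow> real" where
  "pi_rho d S lam pd \<rho> \<theta> x =
     (1 / Zrho d S lam pd \<rho> \<theta>) * (\<Sum>i=1..d. pd x / \<rho> (\<theta> i) * indicator (S i) x)"

text \<open>Metropolis-Hastings acceptance probability (with the HOL convention a/0 = 0).\<close>
definition mh_alpha :: "nat \<Rightarrow> (nat \<Rightarrow> 'a set) \<Rightarrow> 'a measure \<Rightarrow> ('a \<Rightarrow> real) \<Rightarrow> (real \<Rightarrow> real)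
    \<Rightarrow> (nat \<Rightarrow> real) \<Rightarrow> 'a \<Rightarrow> 'a \<Rightarrow> real" where
  "mh_alpha d S lam pd \<rho> \<theta> x y =
     min 1 (pi_rho d S lam pd \<rho> \<theta> y / pi_rho d S lam pd \<rho> \<theta> x)"

definition mh_kernel :: "'a set \<Rightarrow> nat \<Rightarrow> (nat \<Rightarrow> 'a set) \<Rightarrow> 'a measure \<Rightarrow> ('a \<Rightarrow> real)
    \<Rightarrow> ('a \<Rightarrow> 'a \<Rightarrow> real) \<Rightarrow> (real \<Rightarrow> real) \<Rightarrow> (nat \<Rightarrow> real) \<Rightarrow> ('a \<Rightarrow> real) \<Rightarrow> 'a \<Rightarrow> real" where
  "mh_kernel X d S lam pd q \<rho> \<theta> f x =
     (LINT y:X|lam. q x y * mh_alpha d S lam pd \<rho> \<theta> x y * f y)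
     + (1 - (LINT y:X|lam. q x y * mh_alpha d S lam pd \<rho> \<theta> x y)) * f x"

definition tv_kernel_diff :: "'a set \<Rightarrow> nat \<Rightarrow> (nat \<Rightarrow> 'a set) \<Rightarrow> 'a measure \<Rightarrow> ('a \<Rightarrow> real)
    \<Rightarrow> ('a \<Rightarrow> 'a \<Rightarrow> real) \<Rightarrow> (real \<Rightarrow> real) \<Rightarrow> (nat \<Rightarrow> real) \<Rightarrow> (nat \<Rightarrow> real) \<Rightarrow> 'a \<Rightarrow> real" where
  "tv_kernel_diff X d S lam pd q \<rho> \<theta> \<theta>' x =
     Sup {\<bar>mh_kernel X d S lam pd q \<rho> \<theta> f x - mh_kernel X d S lam pd q \<rho> \<theta>' f x\<bar> | f.
            f \<in> borel_measurable lam \<and> (\<forall>y\<in>X. \<bar>f y\<bar> \<le> 1)}"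

end

theory Submission
  imports Defs
begin

text \<open>The normalising constant of the biased target cancels in the Metropolis-Hastings
  ratio, so passing from \<theta> to \<theta>' multiplies the ratio for a move from stratum i to
  stratum j by r i / r j, where r k = \<rho> (\<theta>' k) / \<rho> (\<theta> k). Since t \<mapsto> min 1 t is
  contracting in the relative sense (|min 1 a - min 1 b| \<le> |a - b| / max a b), the two
  acceptance probabilities differ by at most 2 sup |1 - r k|. Writing the kernel as
  P f x = f x + \<integral> q x y \<alpha>(x, y) (f y - f x) dy and using |f y - f x| \<le> 2 then
  gives the factor 4.\<close>

lemma abs_min_one_diff_le:
  fixes a b :: real assumes "0 < a" "0 < b"
  shows "\<bar>min 1 a - min 1 b\<bar> \<le> \<bar>a - b\<bar> / max a b"
proof -
  have "\<bar>min 1 a - min 1 b\<bar> \<le> (b - a) / b" if "0 < a" "a \<le> b" for a b :: real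
    using that mult_nonneg_nonneg[of "b - a" "1 - b"]
    by (auto simp: min_def field_simps)
  from this[of a b] this[of b a] assms show ?thesis
    by (cases "a \<le> b") (auto simp: max_def abs_minus_commute)
qed

lemma abs_diff_div_max_le:
  fixes s t e :: real
  assumes "0 < s" "0 < t" "\<bar>1 - s\<bar> \<le> e" "\<bar>1 - t\<bar> \<le> e"
  shows "\<bar>s - t\<bar> / max s t \<le> 2 * e"
proof -
  have "(t - s) / t \<le> 2 * e" if "0 < s" "s \<le> t" "\<bar>1 - s\<bar> \<le> e" "\<bar>1 - t\<bar> \<le> e" for s t :: real
  proof -
    have "t - s \<le> 2 * e * t"
    proof (cases "t \<ge> 1")
      case True then show ?thesis using that mult_left_mono[of 1 t "2 * e"] by auto
    next
      case False
      show ?thesis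
      proof (cases "2 * t \<ge> 1")
        case True
        moreover have "0 \<le> e" using that(3) by linarith
        ultimately have "e * 1 \<le> e * (2 * t)" by (intro mult_left_mono) auto
        then show ?thesis using that False by linarith
      next
        case False
        then have "1 \<le> 2 * e" using that by linarith
        then have "1 * t \<le> 2 * e * t" using that by (intro mult_right_mono) auto
        then show ?thesis using that by linarith
      qed
    qed
    then show ?thesis using that by (simp add: divide_le_eq)
  qed
  from this[of s t] this[of t s] assms show ?thesis
    by (cases "s \<le> t") (auto simp: max_def abs_minus_commute)
qed

lemma min_one_rescale:
  fixes R s t :: real assumes "0 < R" "0 < s" "0 < t"
  shows "\<bar>min 1 R - min 1 (R * s / t)\<bar> \<le> \<bar>s - t\<bar> / max s t"
proof -
  have "\<bar>R - R * s / t\<bar> / max R (R * s / t) = \<bar>s - t\<bar> / max s t"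
    using assms by (auto simp: max_def abs_if field_simps)
  then show ?thesis using abs_min_one_diff_le[of R "R * s / t"] assms by simp
qed

lemma set_integrable_mult_bounded:
  fixes k h :: "'a \<Rightarrow> real"
  assumes X: "X \<in> sets M" and k: "set_integrable M X k"
    and h: "h \<in> borel_measurable M" and h_bound: "\<And>y. y \<in> X \<Longrightarrow> \<bar>h y\<bar> \<le> B"
  shows "set_integrable M X (\<lambda>y. k y * h y)"
proof (rule set_integrable_bound)
  show "set_integrable M X (\<lambda>y. k y * B)" using k by simp
  have "(\<lambda>y. indicator X y *\<^sub>R k y) \<in> borel_measurable M"
    using k unfolding set_integrable_def by (rule borel_measurable_integrable)
  then show "set_borel_measurable M X (\<lambda>y. k y * h y)"
    unfolding set_borel_measurable_def using h by (simp add: mult.assoc[symmetric])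
  show "AE y in M. y \<in> X \<longrightarrow> norm (k y * h y) \<le> norm (k y * B)"
  proof (intro AE_I2 impI)
    fix y assume "y \<in> X"
    then have "\<bar>h y\<bar> \<le> \<bar>B\<bar>" using h_bound by force
    then show "norm (k y * h y) \<le> norm (k y * B)" by (simp add: abs_mult mult_left_mono)
  qed
qed

lemma accept_reject_diff_le:
  fixes k k' q f :: "'a \<Rightarrow> real"
  assumes X: "X \<in> sets M"
    and k: "set_integrable M X k" and k': "set_integrable M X k'"
    and q: "set_integrable M X q" and q_prob: "(LINT y:X|M. q y) = 1"
    and kk': "\<And>y. y \<in> X \<Longrightarrow> \<bar>k y - k' y\<bar> \<le> c * q y"
    and f: "f \<in> borel_measurable M" and f_bound: "\<And>y. y \<in> X \<Longrightarrow> \<bar>f y\<bar> \<le> 1"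
    and fx: "\<bar>f x\<bar> \<le> 1"
  shows "\<bar>((LINT y:X|M. k y * f y) + (1 - (LINT y:X|M. k y)) * f x)
          - ((LINT y:X|M. k' y * f y) + (1 - (LINT y:X|M. k' y)) * f x)\<bar> \<le> 2 * c"
proof -
  define D where "D y = (k y - k' y) * (f y - f x)" for y
  have kf: "set_integrable M X (\<lambda>y. k y * f y)" "set_integrable M X (\<lambda>y. k' y * f y)"
    using set_integrable_mult_bounded[OF X _ f f_bound] k k' by auto
  have D_split: "D = (\<lambda>y. (k y * f y - k' y * f y) - (k y - k' y) * f x)"
    by (auto simp: D_def algebra_simps)
  have D: "set_integrable M X D"
    unfolding D_split using kf k k' by (intro set_integral_diff set_integrable_mult_left)
  have "((LINT y:X|M. k y * f y) + (1 - (LINT y:X|M. k y)) * f x)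
          - ((LINT y:X|M. k' y * f y) + (1 - (LINT y:X|M. k' y)) * f x) = (LINT y:X|M. D y)"
    unfolding D_split using kf k k'
    by (simp add: set_integral_diff set_integrable_mult_left algebra_simps)
  also have "\<bar>LINT y:X|M. D y\<bar> \<le> (LINT y:X|M. \<bar>D y\<bar>)"
    using set_integral_norm_bound[OF D] by simp
  also have "\<dots> \<le> (LINT y:X|M. 2 * c * q y)"
  proof (rule set_integral_mono)
    show "set_integrable M X (\<lambda>y. \<bar>D y\<bar>)" using set_integrable_norm[OF D] by simp
    show "set_integrable M X (\<lambda>y. 2 * c * q y)" using q by simp
    fix y assume y: "y \<in> X"
    have "\<bar>f y - f x\<bar> \<le> 2" using f_bound[OF y] fx by linarith
    then have "\<bar>k y - k' y\<bar> * \<bar>f y - f x\<bar> \<le> c * q y * 2"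
      using kk'[OF y] by (intro mult_mono) auto
    then show "\<bar>D y\<bar> \<le> 2 * c * q y" by (simp add: D_def abs_mult)
  qed
  also have "\<dots> = 2 * c" using q_prob by simp
  finally show ?thesis .
qed

locale stratified_target =
  fixes X :: "'a set" and d :: nat and S :: "nat \<Rightarrow> 'a set" and lam :: "'a measure"
    and pd :: "'a \<Rightarrow> real" and \<rho> :: "real \<Rightarrow> real"
  assumes pd_meas: "pd \<in> borel_measurable lam"
    and pd_nonneg: "\<And>y. y \<in> X \<Longrightarrow> 0 \<le> pd y"
    and S_meas: "\<And>i. i \<in> {1..d} \<Longrightarrow> S i \<in> sets lam"
    and S_disj: "disjoint_family_on S {1..d}"
    and S_cover: "(\<Union>i\<in>{1..d}. S i) = X"
    and rho_pos: "\<And>t. 0 < t \<Longrightarrow> t < 1 \<Longrightarrow> 0 < \<rho> t"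
begin

lemma rho_Theta_pos: "\<theta> \<in> Theta d \<Longrightarrow> i \<in> {1..d} \<Longrightarrow> 0 < \<rho> (\<theta> i)"
  by (auto simp: Theta_def intro: rho_pos)

lemma theta_star_nonneg:
  assumes "i \<in> {1..d}"
  shows "0 \<le> theta_star S lam pd i"
proof -
  have "S i \<subseteq> X" using assms S_cover by blast
  then have "0 \<le> indicator (S i) z * pd z" for z
    using pd_nonneg by (auto simp: indicator_def)
  then show ?thesis
    unfolding theta_star_def set_lebesgue_integral_def by (simp add: integral_nonneg)
qed

lemma Zrho_eq_0_iff:
  assumes "\<theta> \<in> Theta d"
  shows "Zrho d S lam pd \<rho> \<theta> = 0 \<longleftrightarrow> (\<forall>i\<in>{1..d}. theta_star S lam pd i = 0)"
proof -
  have "Zrho d S lam pd \<rho> \<theta> = 0 \<longleftrightarrow> (\<forall>i\<in>{1..d}. theta_star S lam pd i / \<rho> (\<theta> i) = 0)"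
    unfolding Zrho_def using theta_star_nonneg rho_Theta_pos[OF assms]
    by (intro sum_nonneg_eq_0_iff) (auto intro: divide_nonneg_pos)
  then show ?thesis using rho_Theta_pos[OF assms] by force
qed

lemma pi_rho_nonneg:
  assumes "\<theta> \<in> Theta d" "y \<in> X"
  shows "0 \<le> pi_rho d S lam pd \<rho> \<theta> y"
proof -
  have "0 \<le> Zrho d S lam pd \<rho> \<theta>"
    unfolding Zrho_def using theta_star_nonneg rho_Theta_pos[OF assms(1)]
    by (auto intro!: sum_nonneg divide_nonneg_pos)
  moreover have "0 \<le> (\<Sum>i=1..d. pd y / \<rho> (\<theta> i) * indicator (S i) y)"
    using assms pd_nonneg rho_Theta_pos[OF assms(1)]
    by (auto intro!: sum_nonneg mult_nonneg_nonneg divide_nonneg_pos)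
  ultimately show ?thesis unfolding pi_rho_def by simp
qed

lemma pi_rho_stratum:
  assumes "i \<in> {1..d}" "z \<in> S i"
  shows "pi_rho d S lam pd \<rho> \<theta> z = pd z / \<rho> (\<theta> i) / Zrho d S lam pd \<rho> \<theta>"
proof -
  have "z \<notin> S j" if "j \<in> {1..d} - {i}" for j
    using S_disj assms that unfolding disjoint_family_on_def by blast
  then have "(\<Sum>j=1..d. pd z / \<rho> (\<theta> j) * indicator (S j) z) = pd z / \<rho> (\<theta> i)"
    using assms by (subst sum.remove[of _ i]) (auto intro!: sum.neutral)
  then show ?thesis by (simp add: pi_rho_def)
qed

lemma mh_alpha_measurable: "mh_alpha d S lam pd \<rho> \<theta> x \<in> borel_measurable lam"
proof -
  have "pi_rho d S lam pd \<rho> \<theta> \<in> borel_measurable lam"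
    unfolding pi_rho_def[abs_def] using pd_meas S_meas by measurable
  then show ?thesis unfolding mh_alpha_def[abs_def] by measurable
qed

lemma mh_alpha_abs_le_1:
  assumes "\<theta> \<in> Theta d" "x \<in> X" "y \<in> X"
  shows "\<bar>mh_alpha d S lam pd \<rho> \<theta> x y\<bar> \<le> 1"
  using pi_rho_nonneg[OF assms(1,2)] pi_rho_nonneg[OF assms(1,3)]
  by (simp add: mh_alpha_def)

lemma mh_alpha_strata:
  assumes "Zrho d S lam pd \<rho> \<theta> \<noteq> 0"
    and "i \<in> {1..d}" "x \<in> S i" "j \<in> {1..d}" "y \<in> S j"
  shows "mh_alpha d S lam pd \<rho> \<theta> x y = min 1 ((pd y / \<rho> (\<theta> j)) / (pd x / \<rho> (\<theta> i)))"
  using assms by (simp add: mh_alpha_def pi_rho_stratum)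

lemma mh_alpha_diff_le:
  assumes \<theta>: "\<theta> \<in> Theta d" and \<theta>': "\<theta>' \<in> Theta d" and x: "x \<in> X" and y: "y \<in> X"
    and e: "\<And>i. i \<in> {1..d} \<Longrightarrow> \<bar>1 - \<rho> (\<theta>' i) / \<rho> (\<theta> i)\<bar> \<le> e"
  shows "\<bar>mh_alpha d S lam pd \<rho> \<theta> x y - mh_alpha d S lam pd \<rho> \<theta>' x y\<bar> \<le> 2 * e"
proof -
  obtain i where i: "i \<in> {1..d}" "x \<in> S i" using S_cover x by blast
  obtain j where j: "j \<in> {1..d}" "y \<in> S j" using S_cover y by blast
  have e0: "0 \<le> e" using e[OF i(1)] by linarith
  show ?thesis
  proof (cases "Zrho d S lam pd \<rho> \<theta> = 0")
    case True
    then have "Zrho d S lam pd \<rho> \<theta>' = 0" using Zrho_eq_0_iff[OF \<theta>] Zrho_eq_0_iff[OF \<theta>'] by simp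
    with True e0 show ?thesis by (simp add: mh_alpha_def pi_rho_def)
  next
    case False
    then have False': "Zrho d S lam pd \<rho> \<theta>' \<noteq> 0"
      using Zrho_eq_0_iff[OF \<theta>] Zrho_eq_0_iff[OF \<theta>'] by simp
    define R where "R = (pd y / \<rho> (\<theta> j)) / (pd x / \<rho> (\<theta> i))"
    define r where "r k = \<rho> (\<theta>' k) / \<rho> (\<theta> k)" for k
    have r_pos: "0 < r k" if "k \<in> {1..d}" for k
      using rho_Theta_pos[OF \<theta> that] rho_Theta_pos[OF \<theta>' that] by (simp add: r_def)
    show ?thesis
    proof (cases "pd x = 0 \<or> pd y = 0")
      case True
      \<comment> \<open>both acceptance ratios are 0, with the convention a / 0 = 0 when pd x = 0\<close>
      then show ?thesis using e0 i j False False' by (auto simp: mh_alpha_strata)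
    next
      case False
      then have "0 < R" using pd_nonneg x y rho_Theta_pos[OF \<theta>] i j
        by (auto simp: R_def less_le)
      moreover have "(pd y / \<rho> (\<theta>' j)) / (pd x / \<rho> (\<theta>' i)) = R * r i / r j"
        using rho_Theta_pos[OF \<theta> i(1)] rho_Theta_pos[OF \<theta> j(1)]
          rho_Theta_pos[OF \<theta>' i(1)] rho_Theta_pos[OF \<theta>' j(1)]
        by (simp add: R_def r_def field_simps)
      ultimately have "\<bar>mh_alpha d S lam pd \<rho> \<theta> x y - mh_alpha d S lam pd \<rho> \<theta>' x y\<bar>
          = \<bar>min 1 R - min 1 (R * r i / r j)\<bar>"
        using i j \<open>Zrho d S lam pd \<rho> \<theta> \<noteq> 0\<close> False' by (simp add: mh_alpha_strata R_def)
      also have "\<dots> \<le> \<bar>r i - r j\<bar> / max (r i) (r j)"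
        using \<open>0 < R\<close> i j r_pos by (intro min_one_rescale) auto
      also have "\<dots> \<le> 2 * e"
        using i j r_pos e by (intro abs_diff_div_max_le) (auto simp: r_def)
      finally show ?thesis .
    qed
  qed
qed

end

lemma tv_kernel_diff_le:
  assumes "\<And>f. f \<in> borel_measurable lam \<Longrightarrow> \<forall>y\<in>X. \<bar>f y\<bar> \<le> 1 \<Longrightarrow>
      \<bar>mh_kernel X d S lam pd q \<rho> \<theta> f x - mh_kernel X d S lam pd q \<rho> \<theta>' f x\<bar> \<le> B"
  shows "tv_kernel_diff X d S lam pd q \<rho> \<theta> \<theta>' x \<le> B"
  unfolding tv_kernel_diff_def
proof (rule cSup_least)
  have "(\<lambda>_. 0) \<in> borel_measurable lam \<and> (\<forall>y\<in>X. \<bar>(\<lambda>_. 0::real) y\<bar> \<le> 1)" by simp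
  then show "{\<bar>mh_kernel X d S lam pd q \<rho> \<theta> f x - mh_kernel X d S lam pd q \<rho> \<theta>' f x\<bar> | f.
      f \<in> borel_measurable lam \<and> (\<forall>y\<in>X. \<bar>f y\<bar> \<le> 1)} \<noteq> {}" by blast
qed (use assms in blast)

theorem lemma6p3:
  fixes X :: "'a::euclidean_space set" and lam :: "'a measure"
    and pd :: "'a \<Rightarrow> real" and d :: nat and S :: "nat \<Rightarrow> 'a set"
    and \<rho> :: "real \<Rightarrow> real" and q :: "'a \<Rightarrow> 'a \<Rightarrow> real"
    and \<theta> \<theta>' :: "nat \<Rightarrow> real" and x :: 'a
  assumes lam_borel: "sets lam = sets borel"
    and X_meas: "X \<in> sets lam"
    and pi_meas: "pd \<in> borel_measurable lam"
    and pi_nonneg: "\<And>y. y \<in> X \<Longrightarrow> 0 \<le> pd y"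
    and pi_int: "set_integrable lam X pd"
    and pi_prob: "(LINT y:X|lam. pd y) = 1"
    and S_meas: "\<And>i. i \<in> {1..d} \<Longrightarrow> S i \<in> sets lam"
    and S_disj: "disjoint_family_on S {1..d}"
    and S_cover: "(\<Union>i\<in>{1..d}. S i) = X"
    and rho_meas: "\<rho> \<in> borel_measurable borel"
    and rho_pos: "\<And>t. 0 < t \<Longrightarrow> t < 1 \<Longrightarrow> 0 < \<rho> t"
    and q_meas: "\<And>y. y \<in> X \<Longrightarrow> q y \<in> borel_measurable lam"
    and q_nonneg: "\<And>y z. y \<in> X \<Longrightarrow> z \<in> X \<Longrightarrow> 0 \<le> q y z"
    and q_sym: "\<And>y z. y \<in> X \<Longrightarrow> z \<in> X \<Longrightarrow> q y z = q z y"
    and q_int: "\<And>y. y \<in> X \<Longrightarrow> set_integrable lam X (q y)"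
    and q_prob: "\<And>y. y \<in> X \<Longrightarrow> (LINT z:X|lam. q y z) = 1"
    and theta: "\<theta> \<in> Theta d" and theta': "\<theta>' \<in> Theta d"
    and x: "x \<in> X"
  shows "tv_kernel_diff X d S lam pd q \<rho> \<theta> \<theta>' x
           \<le> 4 * (MAX i\<in>{1..d}. \<bar>1 - \<rho> (\<theta>' i) / \<rho> (\<theta> i)\<bar>)"
proof -
  interpret stratified_target X d S lam pd \<rho>
    using pi_meas pi_nonneg S_meas S_disj S_cover rho_pos by unfold_locales
  define e where "e = (MAX i\<in>{1..d}. \<bar>1 - \<rho> (\<theta>' i) / \<rho> (\<theta> i)\<bar>)"
  have e: "\<And>i. i \<in> {1..d} \<Longrightarrow> \<bar>1 - \<rho> (\<theta>' i) / \<rho> (\<theta> i)\<bar> \<le> e"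
    unfolding e_def by (intro Max_ge) auto
  let ?k = "\<lambda>t y. q x y * mh_alpha d S lam pd \<rho> t x y"
  have k_int: "set_integrable lam X (?k t)" if "t \<in> Theta d" for t
    using set_integrable_mult_bounded[OF X_meas q_int[OF x] mh_alpha_measurable]
      mh_alpha_abs_le_1[OF that x] by blast
  have k_diff: "\<bar>?k \<theta> y - ?k \<theta>' y\<bar> \<le> 2 * e * q x y" if "y \<in> X" for y
  proof -
    have "\<bar>?k \<theta> y - ?k \<theta>' y\<bar>
        = q x y * \<bar>mh_alpha d S lam pd \<rho> \<theta> x y - mh_alpha d S lam pd \<rho> \<theta>' x y\<bar>"
      using q_nonneg[OF x that] by (simp add: abs_mult right_diff_distrib[symmetric])
    also have "\<dots> \<le> q x y * (2 * e)"
      using mh_alpha_diff_le[OF theta theta' x that e] q_nonneg[OF x that] by (rule mult_left_mono)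
    finally show ?thesis by (simp add: mult.commute)
  qed
  show ?thesis
  proof (rule tv_kernel_diff_le)
    fix f :: "'a \<Rightarrow> real" assume f: "f \<in> borel_measurable lam" "\<forall>y\<in>X. \<bar>f y\<bar> \<le> 1"
    have "\<bar>mh_kernel X d S lam pd q \<rho> \<theta> f x - mh_kernel X d S lam pd q \<rho> \<theta>' f x\<bar> \<le> 2 * (2 * e)"
      unfolding mh_kernel_def
      using accept_reject_diff_le[OF X_meas k_int[OF theta] k_int[OF theta'] q_int[OF x] q_prob[OF x]
          k_diff f(1)] f(2) x by simp
    then show "\<bar>mh_kernel X d S lam pd q \<rho> \<theta> f x - mh_kernel X d S lam pd q \<rho> \<theta>' f x\<bar>
        \<le> 4 * (MAX i\<in>{1..d}. \<bar>1 - \<rho> (\<theta>' i) / \<rho> (\<theta> i)\<bar>)"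
      by (simp add: e_def)
  qed
qed

end
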